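(* Let $M$ be a procedure that may contain ghost code and let $\hat M$ be its projection with all ghost code eliminated. Let $c_1$ be a configuration that does not interpret ghost variables/fields. If $\hat M$ started from $c_1$ reaches some configuration $c_2$, then $M$ started from any configuration $C_1$ extending $c_1$ either reaches $\bot$ or reaches some configuration $C_2$ that extends $c_2$.
   Context: Programs are in an imperative while-language with (recursive) methods: assignments, field lookup, field mutation, allocation, method calls, $\mathsf{skip}$, $\mathsf{assume}$, $\mathsf{return}$, sequencing, if-then-else, while. A configuration consists of a store, a finite set of allocated objects and an interpretation of fields; there is an error configuration $\bot$. The program may be augmented with ghost code over distinguished ghost variables and ghost fields, following the grammar: user statements (assignments over user variables/fields, lookup, mutation of user fields, allocation, calls whose arguments/results may include ghost parameters, $\mathsf{skip}$, $\mathsf{assume}$ on user conditions, $\mathsf{return}$, sequencing, if and while on user conditions), plus "pure ghost" programs, generated by: assignments to ghost variables of expressions over user and ghost state, reading fields into ghost variables, writing ghost variables into ghost fields, calls to always-terminating ghost functions over ghost variables, $\mathsf{skip}$, sequencing, if-then-else and while with conditions over user and ghost state and purely ghost bodies, where ghost loops always terminate. The projection $\hat M$ replaces every pure ghost subprogram with $\mathsf{skip}$ and removes ghost parameters from signatures and calls. For a configuration $C$ interpreting ghost state, $\hat C$ is its restriction to user variables/fields ($\hat\bot=\bot$), and $C$ extends $c$ if $\hat C=c$. For simplicity the program consists of the single procedure $M$. *)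

theory Defs
  imports Main
begin

type_synonym var = string
type_synonym fld = string
type_synonym loc = nat

datatype val = IntV int | BoolV bool | RefV loc | NullV

text \<open>Expressions: constants, variables, and applications of arbitrary (total HOL, hence
  always terminating, possibly failing) functions.  Ghost function calls over ghost
  variables are expressions of the form EOp f (map EVar xs).\<close>
datatype expr = EConst val | EVar var | EOp "val list \<Rightarrow> val option" "expr list"

datatype stmt =
    SSkip
  | SAssign var expr
  | SLookup var var fld           (* x := y.f *)
  | SMutate var fld var           (* y.f := z *)
  | SAlloc var
  | SCall "var list" "var list"   (* rs := M(args) *)
  | SAssume expr
  | SReturn
  | SSeq stmt stmt
  | SIf expr stmt stmt
  | SWhile expr stmt

record proc =
  params  :: "var list"
  results :: "var list"
  body    :: stmt

record conf =
  store  :: "var \<Rightarrow> val option"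
  allocd :: "loc set"
  heap   :: "loc \<times> fld \<Rightarrow> val option"

datatype outcome = Norm conf | Ret conf | Bot

fun evars :: "expr \<Rightarrow> var set" where
  "evars (EConst v) = {}"
| "evars (EVar x) = {x}"
| "evars (EOp f es) = \<Union> (set (map evars es))"

fun eval :: "(var \<Rightarrow> val option) \<Rightarrow> expr \<Rightarrow> val option" where
  "eval s (EConst v) = Some v"
| "eval s (EVar x) = s x"
| "eval s (EOp f es) = (case those (map (eval s) es) of None \<Rightarrow> None | Some vs \<Rightarrow> f vs)"

section \<open>Big-step semantics (single procedure P); Bot is the error configuration\<close>

inductive exec :: "proc \<Rightarrow> stmt \<Rightarrow> conf \<Rightarrow> outcome \<Rightarrow> bool" for P where
  Skip: "exec P SSkip \<sigma> (Norm \<sigma>)"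
| Assign: "eval (store \<sigma>) e = Some v \<Longrightarrow>
     exec P (SAssign x e) \<sigma> (Norm (\<sigma>\<lparr>store := (store \<sigma>)(x \<mapsto> v)\<rparr>))"
| AssignErr: "eval (store \<sigma>) e = None \<Longrightarrow> exec P (SAssign x e) \<sigma> Bot"
| Lookup: "\<lbrakk> store \<sigma> y = Some (RefV l); l \<in> allocd \<sigma>; heap \<sigma> (l, f) = Some v \<rbrakk> \<Longrightarrow>
     exec P (SLookup x y f) \<sigma> (Norm (\<sigma>\<lparr>store := (store \<sigma>)(x \<mapsto> v)\<rparr>))"
| LookupErr: "\<not> (\<exists>l v. store \<sigma> y = Some (RefV l) \<and> l \<in> allocd \<sigma> \<and> heap \<sigma> (l, f) = Some v) \<Longrightarrow>
     exec P (SLookup x y f) \<sigma> Bot"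
| Mutate: "\<lbrakk> store \<sigma> y = Some (RefV l); l \<in> allocd \<sigma>; store \<sigma> z = Some v \<rbrakk> \<Longrightarrow>
     exec P (SMutate y f z) \<sigma> (Norm (\<sigma>\<lparr>heap := (heap \<sigma>)((l, f) \<mapsto> v)\<rparr>))"
| MutateErr: "\<not> (\<exists>l v. store \<sigma> y = Some (RefV l) \<and> l \<in> allocd \<sigma> \<and> store \<sigma> z = Some v) \<Longrightarrow>
     exec P (SMutate y f z) \<sigma> Bot"
| Alloc: "l \<notin> allocd \<sigma> \<Longrightarrow>
     exec P (SAlloc x) \<sigma> (Norm (\<sigma>\<lparr>store := (store \<sigma>)(x \<mapsto> RefV l), allocd := insert l (allocd \<sigma>)\<rparr>))"
| Call: "\<lbrakk> map (store \<sigma>) as = map Some vs; length as = length (params P);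
           exec P (body P) (\<sigma>\<lparr>store := Map.empty(params P [\<mapsto>] vs)\<rparr>) out;
           out = Norm \<sigma>1 \<or> out = Ret \<sigma>1;
           map (store \<sigma>1) (results P) = map Some ws; length rs = length (results P) \<rbrakk> \<Longrightarrow>
     exec P (SCall rs as) \<sigma>
       (Norm (\<sigma>\<lparr>store := (store \<sigma>)(rs [\<mapsto>] ws), allocd := allocd \<sigma>1, heap := heap \<sigma>1\<rparr>))"
| CallArgErr: "\<not> (\<exists>vs. map (store \<sigma>) as = map Some vs \<and> length as = length (params P)) \<Longrightarrow>
     exec P (SCall rs as) \<sigma> Bot"
| CallBodyErr: "\<lbrakk> map (store \<sigma>) as = map Some vs; length as = length (params P);
           exec P (body P) (\<sigma>\<lparr>store := Map.empty(params P [\<mapsto>] vs)\<rparr>) Bot \<rbrakk> \<Longrightarrow>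
     exec P (SCall rs as) \<sigma> Bot"
| CallResErr: "\<lbrakk> map (store \<sigma>) as = map Some vs; length as = length (params P);
           exec P (body P) (\<sigma>\<lparr>store := Map.empty(params P [\<mapsto>] vs)\<rparr>) out;
           out = Norm \<sigma>1 \<or> out = Ret \<sigma>1;
           \<not> (\<exists>ws. map (store \<sigma>1) (results P) = map Some ws) \<or> length rs \<noteq> length (results P) \<rbrakk> \<Longrightarrow>
     exec P (SCall rs as) \<sigma> Bot"
| AssumeT: "eval (store \<sigma>) e = Some (BoolV True) \<Longrightarrow> exec P (SAssume e) \<sigma> (Norm \<sigma>)"
| AssumeErr: "\<not> (\<exists>b. eval (store \<sigma>) e = Some (BoolV b)) \<Longrightarrow> exec P (SAssume e) \<sigma> Bot"
| Return: "exec P SReturn \<sigma> (Ret \<sigma>)"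
| Seq: "\<lbrakk> exec P a \<sigma> (Norm \<sigma>'); exec P b \<sigma>' out \<rbrakk> \<Longrightarrow> exec P (SSeq a b) \<sigma> out"
| SeqAbrupt: "\<lbrakk> exec P a \<sigma> out; \<forall>\<sigma>'. out \<noteq> Norm \<sigma>' \<rbrakk> \<Longrightarrow> exec P (SSeq a b) \<sigma> out"
| IfT: "\<lbrakk> eval (store \<sigma>) e = Some (BoolV True); exec P a \<sigma> out \<rbrakk> \<Longrightarrow> exec P (SIf e a b) \<sigma> out"
| IfF: "\<lbrakk> eval (store \<sigma>) e = Some (BoolV False); exec P b \<sigma> out \<rbrakk> \<Longrightarrow> exec P (SIf e a b) \<sigma> out"
| IfErr: "\<not> (\<exists>b. eval (store \<sigma>) e = Some (BoolV b)) \<Longrightarrow> exec P (SIf e a b) \<sigma> Bot"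
| WhileT: "\<lbrakk> eval (store \<sigma>) e = Some (BoolV True); exec P s \<sigma> (Norm \<sigma>');
             exec P (SWhile e s) \<sigma>' out \<rbrakk> \<Longrightarrow> exec P (SWhile e s) \<sigma> out"
| WhileAbrupt: "\<lbrakk> eval (store \<sigma>) e = Some (BoolV True); exec P s \<sigma> out; \<forall>\<sigma>'. out \<noteq> Norm \<sigma>' \<rbrakk> \<Longrightarrow>
     exec P (SWhile e s) \<sigma> out"
| WhileF: "eval (store \<sigma>) e = Some (BoolV False) \<Longrightarrow> exec P (SWhile e s) \<sigma> (Norm \<sigma>)"
| WhileErr: "\<not> (\<exists>b. eval (store \<sigma>) e = Some (BoolV b)) \<Longrightarrow> exec P (SWhile e s) \<sigma> Bot"

text \<open>Running the procedure from a configuration: result None is the error configuration Bot.\<close>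
definition run :: "proc \<Rightarrow> conf \<Rightarrow> conf option \<Rightarrow> bool" where
  "run P \<sigma> r \<longleftrightarrow>
     (case r of None \<Rightarrow> exec P (body P) \<sigma> Bot
              | Some \<sigma>' \<Rightarrow> exec P (body P) \<sigma> (Norm \<sigma>') \<or> exec P (body P) \<sigma> (Ret \<sigma>'))"

section \<open>Ghost code (GV = ghost variables, GF = ghost fields)\<close>

fun pure_ghost :: "var set \<Rightarrow> fld set \<Rightarrow> stmt \<Rightarrow> bool" where
  "pure_ghost GV GF (SAssign x e) = (x \<in> GV)"
| "pure_ghost GV GF (SLookup x y f) = (x \<in> GV)"
| "pure_ghost GV GF (SMutate y f z) = (f \<in> GF \<and> z \<in> GV)"
| "pure_ghost GV GF SSkip = True"
| "pure_ghost GV GF (SSeq a b) = (pure_ghost GV GF a \<and> pure_ghost GV GF b)"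
| "pure_ghost GV GF (SIf e a b) = (pure_ghost GV GF a \<and> pure_ghost GV GF b)"
| "pure_ghost GV GF (SWhile e s) = pure_ghost GV GF s"
| "pure_ghost GV GF _ = False"

text \<open>Augmented (user) statements; ps/rs are the formal parameters/results of the procedure.\<close>
fun aug :: "var set \<Rightarrow> fld set \<Rightarrow> var list \<Rightarrow> var list \<Rightarrow> stmt \<Rightarrow> bool" where
  "aug GV GF ps rs (SAssign x e) = (pure_ghost GV GF (SAssign x e) \<or> (x \<notin> GV \<and> evars e \<inter> GV = {}))"
| "aug GV GF ps rs (SLookup x y f) =
     (pure_ghost GV GF (SLookup x y f) \<or> (x \<notin> GV \<and> y \<notin> GV \<and> f \<notin> GF))"
| "aug GV GF ps rs (SMutate y f z) =
     (pure_ghost GV GF (SMutate y f z) \<or> (y \<notin> GV \<and> z \<notin> GV \<and> f \<notin> GF))"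
| "aug GV GF ps rs (SAlloc x) = (x \<notin> GV)"
| "aug GV GF ps rs (SCall r a) =
     (length r = length rs \<and> length a = length ps \<and>
      (\<forall>i<length a. ps ! i \<notin> GV \<longrightarrow> a ! i \<notin> GV) \<and>
      (\<forall>i<length r. rs ! i \<in> GV \<longleftrightarrow> r ! i \<in> GV))"
| "aug GV GF ps rs SSkip = True"
| "aug GV GF ps rs (SAssume e) = (evars e \<inter> GV = {})"
| "aug GV GF ps rs SReturn = True"
| "aug GV GF ps rs (SSeq a b) =
     (pure_ghost GV GF (SSeq a b) \<or> (aug GV GF ps rs a \<and> aug GV GF ps rs b))"
| "aug GV GF ps rs (SIf e a b) =
     (pure_ghost GV GF (SIf e a b) \<or> (evars e \<inter> GV = {} \<and> aug GV GF ps rs a \<and> aug GV GF ps rs b))"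
| "aug GV GF ps rs (SWhile e s) =
     (pure_ghost GV GF (SWhile e s) \<or> (evars e \<inter> GV = {} \<and> aug GV GF ps rs s))"

definition wf_proc :: "var set \<Rightarrow> fld set \<Rightarrow> proc \<Rightarrow> bool" where
  "wf_proc GV GF P \<longleftrightarrow> aug GV GF (params P) (results P) (body P)"

fun substmts :: "stmt \<Rightarrow> stmt set" where
  "substmts (SSeq a b) = insert (SSeq a b) (substmts a \<union> substmts b)"
| "substmts (SIf e a b) = insert (SIf e a b) (substmts a \<union> substmts b)"
| "substmts (SWhile e s) = insert (SWhile e s) (substmts s)"
| "substmts s = {s}"

definition ghost_loops_terminate :: "var set \<Rightarrow> fld set \<Rightarrow> proc \<Rightarrow> bool" where
  "ghost_loops_terminate GV GF P \<longleftrightarrow>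
     (\<forall>e s. SWhile e s \<in> substmts (body P) \<and> pure_ghost GV GF (SWhile e s) \<longrightarrow>
        (\<forall>\<sigma>. \<exists>out. exec P (SWhile e s) \<sigma> out))"

definition proj_list :: "var set \<Rightarrow> var list \<Rightarrow> 'a list \<Rightarrow> 'a list" where
  "proj_list GV fs as = map snd (filter (\<lambda>(p, a). p \<notin> GV) (zip fs as))"

fun proj_stmt :: "var set \<Rightarrow> fld set \<Rightarrow> var list \<Rightarrow> var list \<Rightarrow> stmt \<Rightarrow> stmt" where
  "proj_stmt GV GF ps rs s =
    (if pure_ghost GV GF s then SSkip else
     (case s of
        SSeq a b \<Rightarrow> SSeq (proj_stmt GV GF ps rs a) (proj_stmt GV GF ps rs b)
      | SIf e a b \<Rightarrow> SIf e (proj_stmt GV GF ps rs a) (proj_stmt GV GF ps rs b)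
      | SWhile e b \<Rightarrow> SWhile e (proj_stmt GV GF ps rs b)
      | SCall r a \<Rightarrow> SCall (proj_list GV rs r) (proj_list GV ps a)
      | _ \<Rightarrow> s))"

definition proj :: "var set \<Rightarrow> fld set \<Rightarrow> proc \<Rightarrow> proc" where
  "proj GV GF P =
     \<lparr> params = filter (\<lambda>p. p \<notin> GV) (params P),
       results = filter (\<lambda>p. p \<notin> GV) (results P),
       body = proj_stmt GV GF (params P) (results P) (body P) \<rparr>"

definition restrict :: "var set \<Rightarrow> fld set \<Rightarrow> conf \<Rightarrow> conf" where
  "restrict GV GF C =
     \<lparr> store = store C |` (- GV), allocd = allocd C, heap = heap C |` {p. snd p \<notin> GF} \<rparr>"

definition extends :: "var set \<Rightarrow> fld set \<Rightarrow> conf \<Rightarrow> conf \<Rightarrow> bool" where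
  "extends GV GF C c \<longleftrightarrow> restrict GV GF C = c"

definition user_conf :: "var set \<Rightarrow> fld set \<Rightarrow> conf \<Rightarrow> bool" where
  "user_conf GV GF c \<longleftrightarrow> dom (store c) \<inter> GV = {} \<and> (\<forall>p \<in> dom (heap c). snd p \<notin> GF)
                           \<and> finite (allocd c)"

end

theory Submission
  imports Defs
begin

text \<open>Run M from C1 alongside the run of the projection from c1, by induction on the latter,
  keeping the invariant that the user part of M's configuration is the projection's
  configuration. User statements read and write no ghost variables or fields, so they take
  the same step on both sides; a call passes ghost arguments only to ghost parameters and
  receives ghost results only in ghost variables. Pure ghost code, which the projection
  replaces by skip, cannot return or call, terminates because ghost loops do, and writes
  only ghost state; so it either fails or preserves the invariant.\<close>

lemma substmts_refl: "s \<in> substmts s"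
  by (cases s) auto

lemma substmts_trans: "s \<in> substmts t \<Longrightarrow> substmts s \<subseteq> substmts t"
  by (induction t) auto

lemma SSeq_in_substmtsD: "SSeq a b \<in> substmts t \<Longrightarrow> a \<in> substmts t \<and> b \<in> substmts t"
  using substmts_trans substmts_refl by fastforce

lemma SIf_in_substmtsD: "SIf e a b \<in> substmts t \<Longrightarrow> a \<in> substmts t \<and> b \<in> substmts t"
  using substmts_trans substmts_refl by fastforce

lemma SWhile_in_substmtsD: "SWhile e s \<in> substmts t \<Longrightarrow> s \<in> substmts t"
  using substmts_trans substmts_refl by fastforce

lemma exec_pure_ghost_restrict:
  "exec P s C out \<Longrightarrow> pure_ghost GV GF s \<Longrightarrow>
   out = Bot \<or> (\<exists>C'. out = Norm C' \<and> restrict GV GF C' = restrict GV GF C)"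
  by (induction rule: exec.induct) (auto simp: restrict_def)

lemma exec_pure_ghost_total:
  assumes "ghost_loops_terminate GV GF P"
  shows "pure_ghost GV GF s \<Longrightarrow> s \<in> substmts (body P) \<Longrightarrow> \<exists>out. exec P s C out"
proof (induction s arbitrary: C)
  case (SSeq a b)
  then have ghost: "pure_ghost GV GF a" "pure_ghost GV GF b"
    and sub: "a \<in> substmts (body P)" "b \<in> substmts (body P)"
    by (auto dest: SSeq_in_substmtsD)
  obtain oa where oa: "exec P a C oa"
    using SSeq.IH(1) ghost sub by blast
  show ?case
  proof (cases oa)
    case (Norm C')
    obtain ob where "exec P b C' ob"
      using SSeq.IH(2) ghost sub by blast
    with oa Norm show ?thesis by (blast intro: exec.Seq)
  qed (use oa in \<open>auto intro: exec.SeqAbrupt\<close>)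
next
  case (SIf e a b)
  then have "\<exists>oa. exec P a C oa" "\<exists>ob. exec P b C ob" by (auto dest: SIf_in_substmtsD)
  then show ?case by (metis exec.IfT exec.IfF exec.IfErr)
next
  case (SWhile e s)
  then show ?case using assms unfolding ghost_loops_terminate_def by blast
next
  case (SAssign x e)
  then show ?case by (cases "eval (store C) e") (auto intro: exec.Assign exec.AssignErr)
qed (auto intro: exec.Skip exec.Lookup exec.LookupErr exec.Mutate exec.MutateErr)

lemma eval_cong: "(\<And>x. x \<in> evars e \<Longrightarrow> s x = s' x) \<Longrightarrow> eval s e = eval s' e"
proof (induction e)
  case (EOp f es)
  then have "map (eval s) es = map (eval s') es" by auto
  then show ?case by (simp only: eval.simps)
qed auto

lemma eval_restrict_user: "evars e \<inter> GV = {} \<Longrightarrow> eval (s |` (- GV)) e = eval s e"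
  by (rule eval_cong) (auto simp: restrict_map_def)

lemma proj_list_simps [simp]:
  "proj_list GV [] xs = []"
  "proj_list GV ps [] = []"
  "proj_list GV (p # ps) (x # xs) = (if p \<in> GV then proj_list GV ps xs else x # proj_list GV ps xs)"
  by (auto simp: proj_list_def)

lemma proj_list_map: "proj_list GV ps (map f xs) = map f (proj_list GV ps xs)"
  by (induction ps xs rule: list_induct2') auto

lemma proj_list_map_cong:
  "(\<And>p x. (p, x) \<in> set (zip ps xs) \<Longrightarrow> p \<notin> GV \<Longrightarrow> f x = g x) \<Longrightarrow>
   proj_list GV ps (map f xs) = proj_list GV ps (map g xs)"
  by (induction ps xs rule: list_induct2') auto

lemma proj_list_self: "proj_list GV xs xs = filter (\<lambda>x. x \<notin> GV) xs"
  by (induction xs) auto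

lemma proj_list_cong:
  "list_all2 (\<lambda>p q. p \<in> GV \<longleftrightarrow> q \<in> GV) ps qs \<Longrightarrow> proj_list GV ps xs = proj_list GV qs xs"
proof (induction ps qs arbitrary: xs rule: list_all2_induct)
  case (Cons p q ps qs)
  then show ?case by (cases xs) auto
qed simp

lemma restrict_map_upds:
  "length ps = length vs \<Longrightarrow>
   m(ps [\<mapsto>] vs) |` (- GV) = (m |` (- GV))(filter (\<lambda>p. p \<notin> GV) ps [\<mapsto>] proj_list GV ps vs)"
proof (induction ps arbitrary: vs m)
  case (Cons p ps)
  then obtain v vs' where vs: "vs = v # vs'" by (cases vs) auto
  have IH: "(m(p \<mapsto> v))(ps [\<mapsto>] vs') |` (- GV) =
      (m(p \<mapsto> v) |` (- GV))(filter (\<lambda>p. p \<notin> GV) ps [\<mapsto>] proj_list GV ps vs')"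
    by (rule Cons.IH) (use Cons.prems vs in simp)
  have upd: "m(p \<mapsto> v) |` (- GV) = (if p \<in> GV then m |` (- GV) else (m |` (- GV))(p \<mapsto> v))"
    by (auto simp: restrict_map_def fun_eq_iff)
  show ?case
    using IH upd by (simp add: vs del: restrict_fun_upd)
qed simp

declare proj_stmt.simps [simp del]

lemma proj_stmt_simps [simp]:
  "proj_stmt GV GF ps rs SSkip = SSkip"
  "proj_stmt GV GF ps rs (SAssign x e) = (if x \<in> GV then SSkip else SAssign x e)"
  "proj_stmt GV GF ps rs (SLookup x y f) = (if x \<in> GV then SSkip else SLookup x y f)"
  "proj_stmt GV GF ps rs (SMutate y f z) = (if f \<in> GF \<and> z \<in> GV then SSkip else SMutate y f z)"
  "proj_stmt GV GF ps rs (SAlloc x) = SAlloc x"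
  "proj_stmt GV GF ps rs (SCall r a) = SCall (proj_list GV rs r) (proj_list GV ps a)"
  "proj_stmt GV GF ps rs (SAssume e) = SAssume e"
  "proj_stmt GV GF ps rs SReturn = SReturn"
  "proj_stmt GV GF ps rs (SSeq s1 s2) =
     (if pure_ghost GV GF s1 \<and> pure_ghost GV GF s2 then SSkip
      else SSeq (proj_stmt GV GF ps rs s1) (proj_stmt GV GF ps rs s2))"
  "proj_stmt GV GF ps rs (SIf e s1 s2) =
     (if pure_ghost GV GF s1 \<and> pure_ghost GV GF s2 then SSkip
      else SIf e (proj_stmt GV GF ps rs s1) (proj_stmt GV GF ps rs s2))"
  "proj_stmt GV GF ps rs (SWhile e s) =
     (if pure_ghost GV GF s then SSkip else SWhile e (proj_stmt GV GF ps rs s))"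
  by (subst proj_stmt.simps; simp)+

lemma proj_stmt_eq_SSkipD: "proj_stmt GV GF ps rs s = SSkip \<Longrightarrow> pure_ghost GV GF s"
  by (cases s) (auto split: if_splits)

fun map_outcome :: "(conf \<Rightarrow> conf) \<Rightarrow> outcome \<Rightarrow> outcome" where
  "map_outcome f (Norm C) = Norm (f C)"
| "map_outcome f (Ret C) = Ret (f C)"
| "map_outcome f Bot = Bot"

lemma map_outcome_eq_iff [simp]:
  "map_outcome f r = Norm c \<longleftrightarrow> (\<exists>C. r = Norm C \<and> f C = c)"
  "map_outcome f r = Ret c \<longleftrightarrow> (\<exists>C. r = Ret C \<and> f C = c)"
  "map_outcome f r = Bot \<longleftrightarrow> r = Bot"
  by (cases r; auto)+

definition simulates :: "var set \<Rightarrow> fld set \<Rightarrow> proc \<Rightarrow> stmt \<Rightarrow> conf \<Rightarrow> outcome \<Rightarrow> bool" where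
  "simulates GV GF P s C out \<longleftrightarrow>
     exec P s C Bot \<or> (\<exists>r. exec P s C r \<and> map_outcome (restrict GV GF) r = out)"

lemma eval_store_restrict:
  "evars e \<inter> GV = {} \<Longrightarrow> eval (store (restrict GV GF C)) e = eval (store C) e"
  by (simp add: restrict_def eval_restrict_user)

lemma simulates_SAssign:
  assumes "restrict GV GF C = c" "x \<notin> GV" "evars e \<inter> GV = {}" "eval (store c) e = Some v"
  shows "simulates GV GF P (SAssign x e) C (Norm (c\<lparr>store := (store c)(x \<mapsto> v)\<rparr>))"
proof -
  have "exec P (SAssign x e) C (Norm (C\<lparr>store := (store C)(x \<mapsto> v)\<rparr>))"
    using assms eval_store_restrict by (metis exec.Assign)
  then show ?thesis
    using assms unfolding simulates_def by (force simp: restrict_def)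
qed

lemma simulates_SLookup:
  assumes "restrict GV GF C = c" "x \<notin> GV" "y \<notin> GV" "f \<notin> GF"
    and "store c y = Some (RefV l)" "l \<in> allocd c" "heap c (l, f) = Some v"
  shows "simulates GV GF P (SLookup x y f) C (Norm (c\<lparr>store := (store c)(x \<mapsto> v)\<rparr>))"
proof -
  have "exec P (SLookup x y f) C (Norm (C\<lparr>store := (store C)(x \<mapsto> v)\<rparr>))"
    using assms by (intro exec.Lookup) (auto simp: restrict_def)
  then show ?thesis
    using assms unfolding simulates_def by (force simp: restrict_def)
qed

lemma simulates_SMutate:
  assumes "restrict GV GF C = c" "y \<notin> GV" "z \<notin> GV" "f \<notin> GF"
    and "store c y = Some (RefV l)" "l \<in> allocd c" "store c z = Some v"
  shows "simulates GV GF P (SMutate y f z) C (Norm (c\<lparr>heap := (heap c)((l, f) \<mapsto> v)\<rparr>))"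
proof -
  have "exec P (SMutate y f z) C (Norm (C\<lparr>heap := (heap C)((l, f) \<mapsto> v)\<rparr>))"
    using assms by (intro exec.Mutate) (auto simp: restrict_def)
  then show ?thesis
    using assms unfolding simulates_def by (force simp: restrict_def)
qed

lemma simulates_SAlloc:
  assumes "restrict GV GF C = c" "x \<notin> GV" "l \<notin> allocd c"
  shows "simulates GV GF P (SAlloc x) C
           (Norm (c\<lparr>store := (store c)(x \<mapsto> RefV l), allocd := insert l (allocd c)\<rparr>))"
proof -
  have "exec P (SAlloc x) C
          (Norm (C\<lparr>store := (store C)(x \<mapsto> RefV l), allocd := insert l (allocd C)\<rparr>))"
    using assms by (intro exec.Alloc) (auto simp: restrict_def)
  then show ?thesis
    using assms unfolding simulates_def by (force simp: restrict_def)
qed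

lemma simulates_SAssume:
  assumes "restrict GV GF C = c" "evars e \<inter> GV = {}" "eval (store c) e = Some (BoolV True)"
  shows "simulates GV GF P (SAssume e) C (Norm c)"
  using assms eval_store_restrict exec.AssumeT unfolding simulates_def by fastforce

lemma simulates_SReturn: "restrict GV GF C = c \<Longrightarrow> simulates GV GF P SReturn C (Ret c)"
  unfolding simulates_def by (force intro: exec.Return)

lemma simulates_pure_ghost:
  assumes "ghost_loops_terminate GV GF P" "pure_ghost GV GF s" "s \<in> substmts (body P)"
    and "restrict GV GF C = c"
  shows "simulates GV GF P s C (Norm c)"
proof -
  obtain out where "exec P s C out"
    using exec_pure_ghost_total assms by blast
  with exec_pure_ghost_restrict[OF this assms(2)] show ?thesis
    using assms(4) unfolding simulates_def by force
qed

lemma simulates_SSeq: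
  assumes "simulates GV GF P a C (Norm c')"
    and "\<And>C'. restrict GV GF C' = c' \<Longrightarrow> simulates GV GF P b C' out"
  shows "simulates GV GF P (SSeq a b) C out"
  using assms unfolding simulates_def by (auto intro: exec.Seq exec.SeqAbrupt)

lemma simulates_SSeq_abrupt:
  "simulates GV GF P a C out \<Longrightarrow> \<forall>c'. out \<noteq> Norm c' \<Longrightarrow> simulates GV GF P (SSeq a b) C out"
  unfolding simulates_def by (cases out) (auto intro: exec.SeqAbrupt)

lemma simulates_SIf_True:
  assumes "restrict GV GF C = c" "evars e \<inter> GV = {}" "eval (store c) e = Some (BoolV True)"
    and "simulates GV GF P a C out"
  shows "simulates GV GF P (SIf e a b) C out"
  using assms eval_store_restrict unfolding simulates_def by (metis exec.IfT)

lemma simulates_SIf_False: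
  assumes "restrict GV GF C = c" "evars e \<inter> GV = {}" "eval (store c) e = Some (BoolV False)"
    and "simulates GV GF P b C out"
  shows "simulates GV GF P (SIf e a b) C out"
  using assms eval_store_restrict unfolding simulates_def by (metis exec.IfF)

lemma simulates_SWhile_True:
  assumes "restrict GV GF C = c" "evars e \<inter> GV = {}" "eval (store c) e = Some (BoolV True)"
    and "simulates GV GF P s C (Norm c')"
    and "\<And>C'. restrict GV GF C' = c' \<Longrightarrow> simulates GV GF P (SWhile e s) C' out"
  shows "simulates GV GF P (SWhile e s) C out"
proof -
  have "eval (store C) e = Some (BoolV True)"
    using assms(1-3) eval_store_restrict by metis
  then show ?thesis
    using assms(4,5) unfolding simulates_def by (auto intro: exec.WhileT exec.WhileAbrupt)
qed

lemma simulates_SWhile_abrupt: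
  assumes "restrict GV GF C = c" "evars e \<inter> GV = {}" "eval (store c) e = Some (BoolV True)"
    and "simulates GV GF P s C out" "\<forall>c'. out \<noteq> Norm c'"
  shows "simulates GV GF P (SWhile e s) C out"
proof -
  have "eval (store C) e = Some (BoolV True)"
    using assms(1-3) eval_store_restrict by metis
  then show ?thesis
    using assms(4,5) unfolding simulates_def by (cases out) (auto intro: exec.WhileAbrupt)
qed

lemma simulates_SWhile_False:
  assumes "restrict GV GF C = c" "evars e \<inter> GV = {}" "eval (store c) e = Some (BoolV False)"
  shows "simulates GV GF P (SWhile e s) C (Norm c)"
  using assms eval_store_restrict unfolding simulates_def by (force intro: exec.WhileF)

lemma proj_list_Some_eq:
  assumes "map f (proj_list GV ps xs) = map Some vs" "map g xs = map Some ws"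
    and "\<And>p x. (p, x) \<in> set (zip ps xs) \<Longrightarrow> p \<notin> GV \<Longrightarrow> f x = g x"
  shows "vs = proj_list GV ps ws"
proof -
  have "map Some vs = proj_list GV ps (map f xs)"
    using assms(1) by (simp add: proj_list_map)
  also have "\<dots> = proj_list GV ps (map g xs)"
    using assms(3) by (rule proj_list_map_cong)
  also have "\<dots> = map Some (proj_list GV ps ws)"
    using assms(2) by (simp add: proj_list_map)
  finally show ?thesis
    by (simp add: inj_map_eq_map)
qed

lemma restrict_call_entry:
  assumes call: "aug GV GF (params P) (results P) (SCall rs as)"
    and "map (store C) as = map Some vs0"
    and "map (store (restrict GV GF C)) (proj_list GV (params P) as) = map Some vs"
  shows "restrict GV GF (C\<lparr>store := Map.empty(params P [\<mapsto>] vs0)\<rparr>) =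
           (restrict GV GF C)\<lparr>store := Map.empty(params (proj GV GF P) [\<mapsto>] vs)\<rparr>"
proof -
  from call have len: "length as = length (params P)"
    and ghost_args: "\<And>i. i < length as \<Longrightarrow> params P ! i \<notin> GV \<Longrightarrow> as ! i \<notin> GV"
    by auto
  have "vs = proj_list GV (params P) vs0"
  proof (rule proj_list_Some_eq[OF assms(3,2)])
    fix p x assume "(p, x) \<in> set (zip (params P) as)" "p \<notin> GV"
    then have "x \<notin> GV"
      using len ghost_args by (auto simp: set_zip)
    then show "store (restrict GV GF C) x = store C x"
      by (simp add: restrict_def)
  qed
  moreover have "length vs0 = length (params P)"
    using assms(2) len by (metis length_map)
  ultimately show ?thesis
    by (simp add: restrict_def proj_def restrict_map_upds)
qed

lemma restrict_call_exit:
  assumes call: "aug GV GF (params P) (results P) (SCall rs as)"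
    and "map (store C1) (results P) = map Some ws0"
    and "map (store (restrict GV GF C1)) (results (proj GV GF P)) = map Some ws"
  shows "restrict GV GF
           (C\<lparr>store := (store C)(rs [\<mapsto>] ws0), allocd := allocd C1, heap := heap C1\<rparr>) =
         (restrict GV GF C)\<lparr>
           store := (store (restrict GV GF C))(proj_list GV (results P) rs [\<mapsto>] ws),
           allocd := allocd (restrict GV GF C1), heap := heap (restrict GV GF C1)\<rparr>"
proof -
  from call have "list_all2 (\<lambda>p q. p \<in> GV \<longleftrightarrow> q \<in> GV) rs (results P)"
    by (auto simp: list_all2_conv_all_nth)
  then have same_ghosts: "proj_list GV rs xs = proj_list GV (results P) xs" for xs
    by (rule proj_list_cong)
  have "map (store (restrict GV GF C1)) (proj_list GV (results P) (results P)) = map Some ws"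
    using assms(3) by (simp add: proj_def proj_list_self)
  then have "ws = proj_list GV (results P) ws0"
    using assms(2) by (rule proj_list_Some_eq) (auto simp: restrict_def set_zip)
  moreover have "length ws0 = length rs"
    using assms(2) call by (metis aug.simps(5) length_map)
  moreover have "filter (\<lambda>p. p \<notin> GV) rs = proj_list GV (results P) rs"
    by (metis proj_list_self same_ghosts)
  ultimately show ?thesis
    by (simp add: restrict_def restrict_map_upds same_ghosts)
qed

lemma simulates_SCall:
  assumes call: "aug GV GF (params P) (results P) (SCall rs as)"
    and C: "restrict GV GF C = c"
    and args: "map (store c) (proj_list GV (params P) as) = map Some vs"
    and callee: "\<And>C0. restrict GV GF C0 = c\<lparr>store := Map.empty(params (proj GV GF P) [\<mapsto>] vs)\<rparr> \<Longrightarrow>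
                   simulates GV GF P (body P) C0 out"
    and out: "out = Norm c1 \<or> out = Ret c1"
    and res: "map (store c1) (results (proj GV GF P)) = map Some ws"
  shows "simulates GV GF P (SCall rs as) C
           (Norm (c\<lparr>store := (store c)(proj_list GV (results P) rs [\<mapsto>] ws),
                    allocd := allocd c1, heap := heap c1\<rparr>))"
    (is "simulates GV GF P ?call C (Norm ?c2)")
proof (cases "\<exists>vs0. map (store C) as = map Some vs0")
  case False
  then have "exec P ?call C Bot"
    using call by (auto intro: exec.CallArgErr)
  then show ?thesis by (simp add: simulates_def)
next
  case True
  then obtain vs0 where vs0: "map (store C) as = map Some vs0" by blast
  have len: "length as = length (params P)" "length rs = length (results P)"
    using call by auto
  define C0 where "C0 = C\<lparr>store := Map.empty(params P [\<mapsto>] vs0)\<rparr>"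
  have "simulates GV GF P (body P) C0 out"
    using callee restrict_call_entry[OF call vs0] args C by (simp add: C0_def)
  then consider "exec P (body P) C0 Bot"
    | C1 r where "exec P (body P) C0 r" "r = Norm C1 \<or> r = Ret C1" "restrict GV GF C1 = c1"
    using out unfolding simulates_def by auto
  then show ?thesis
  proof cases
    case 1
    then have "exec P ?call C Bot"
      using vs0 len by (auto simp: C0_def intro: exec.CallBodyErr)
    then show ?thesis by (simp add: simulates_def)
  next
    case (2 C1 r)
    show ?thesis
    proof (cases "\<exists>ws0. map (store C1) (results P) = map Some ws0")
      case False
      then have "exec P ?call C Bot"
        using 2 vs0 len by (auto simp: C0_def intro: exec.CallResErr)
      then show ?thesis by (simp add: simulates_def)
    next
      case True
      then obtain ws0 where ws0: "map (store C1) (results P) = map Some ws0" by blast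
      let ?C2 = "C\<lparr>store := (store C)(rs [\<mapsto>] ws0), allocd := allocd C1, heap := heap C1\<rparr>"
      have "exec P ?call C (Norm ?C2)"
        using 2 vs0 ws0 len by (auto simp: C0_def intro: exec.Call)
      moreover have "restrict GV GF ?C2 = ?c2"
        using restrict_call_exit[OF call ws0] res C 2(3) by simp
      ultimately show ?thesis
        unfolding simulates_def by (metis map_outcome.simps(1))
    qed
  qed
qed

lemma exec_proj_simulates:
  assumes wf: "wf_proc GV GF M" and ghost_term: "ghost_loops_terminate GV GF M"
  shows "exec (proj GV GF M) t c out \<Longrightarrow> t = proj_stmt GV GF (params M) (results M) s \<Longrightarrow>
    aug GV GF (params M) (results M) s \<Longrightarrow> s \<in> substmts (body M) \<Longrightarrow>
    restrict GV GF C = c \<Longrightarrow> out \<noteq> Bot \<Longrightarrow> simulates GV GF M s C out"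
proof (induction arbitrary: s C rule: exec.induct)
  case Skip
  then show ?case using proj_stmt_eq_SSkipD simulates_pure_ghost[OF ghost_term] by metis
next
  case Assign
  then show ?case by (cases s) (auto split: if_splits intro: simulates_SAssign)
next
  case Lookup
  then show ?case by (cases s) (auto split: if_splits intro: simulates_SLookup)
next
  case Mutate
  then show ?case by (cases s) (auto split: if_splits intro: simulates_SMutate)
next
  case Alloc
  then show ?case by (cases s) (auto split: if_splits intro: simulates_SAlloc)
next
  case AssumeT
  then show ?case by (cases s) (auto split: if_splits intro: simulates_SAssume)
next
  case Return
  then show ?case by (cases s) (auto split: if_splits intro: simulates_SReturn)
next
  case (Seq a c c' b out)
  then obtain s1 s2 where s: "s = SSeq s1 s2"
      "a = proj_stmt GV GF (params M) (results M) s1" "aug GV GF (params M) (results M) s1"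
      "b = proj_stmt GV GF (params M) (results M) s2" "aug GV GF (params M) (results M) s2"
    by (cases s) (auto split: if_splits)
  with Seq show ?case
    by (blast dest: SSeq_in_substmtsD intro: simulates_SSeq)
next
  case (SeqAbrupt a c out b)
  then obtain s1 s2 where s: "s = SSeq s1 s2"
      "a = proj_stmt GV GF (params M) (results M) s1" "aug GV GF (params M) (results M) s1"
    by (cases s) (auto split: if_splits)
  with SeqAbrupt show ?case
    by (blast dest: SSeq_in_substmtsD intro: simulates_SSeq_abrupt)
next
  case (IfT c e a out b)
  then obtain s1 s2 where s: "s = SIf e s1 s2" "evars e \<inter> GV = {}"
      "a = proj_stmt GV GF (params M) (results M) s1" "aug GV GF (params M) (results M) s1"
    by (cases s) (auto split: if_splits)
  with IfT show ?case
    by (blast dest: SIf_in_substmtsD intro: simulates_SIf_True)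
next
  case (IfF c e b out a)
  then obtain s1 s2 where s: "s = SIf e s1 s2" "evars e \<inter> GV = {}"
      "b = proj_stmt GV GF (params M) (results M) s2" "aug GV GF (params M) (results M) s2"
    by (cases s) (auto split: if_splits)
  with IfF show ?case
    by (blast dest: SIf_in_substmtsD intro: simulates_SIf_False)
next
  case (WhileT c e b c' out)
  then obtain s1 where s: "s = SWhile e s1" "evars e \<inter> GV = {}"
      "b = proj_stmt GV GF (params M) (results M) s1" "aug GV GF (params M) (results M) s1"
    by (cases s) (auto split: if_splits)
  with WhileT show ?case
    by (blast dest: SWhile_in_substmtsD intro: simulates_SWhile_True)
next
  case (WhileAbrupt c e b out)
  then obtain s1 where s: "s = SWhile e s1" "evars e \<inter> GV = {}"
      "b = proj_stmt GV GF (params M) (results M) s1" "aug GV GF (params M) (results M) s1"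
    by (cases s) (auto split: if_splits)
  with WhileAbrupt show ?case
    by (blast dest: SWhile_in_substmtsD intro: simulates_SWhile_abrupt)
next
  case WhileF
  then show ?case by (cases s) (auto split: if_splits intro: simulates_SWhile_False)
next
  case (Call c as vs out c1 ws rs)
  then obtain rs0 as0 where s: "s = SCall rs0 as0"
      "rs = proj_list GV (results M) rs0" "as = proj_list GV (params M) as0"
    by (cases s) (auto split: if_splits)
  have callee: "simulates GV GF M (body M) C0 out"
    if "restrict GV GF C0 = c\<lparr>store := Map.empty(params (proj GV GF M) [\<mapsto>] vs)\<rparr>" for C0
    using Call.IH[OF _ _ substmts_refl that] Call.hyps(4) wf
    by (auto simp: proj_def wf_proc_def)
  have "simulates GV GF M (SCall rs0 as0) C
          (Norm (c\<lparr>store := (store c)(proj_list GV (results M) rs0 [\<mapsto>] ws),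
                   allocd := allocd c1, heap := heap c1\<rparr>))"
    using Call.prems(2,4) Call.hyps(1,4,5) s callee by (intro simulates_SCall) auto
  then show ?case
    using s by simp
qed simp_all

theorem lemmaB4:
  assumes "wf_proc GV GF M"
    and "ghost_loops_terminate GV GF M"
    and "user_conf GV GF c1"
    and "run (proj GV GF M) c1 (Some c2)"
    and "extends GV GF C1 c1"
  shows "run M C1 None \<or> (\<exists>C2. run M C1 (Some C2) \<and> extends GV GF C2 c2)"
proof -
  from assms(4) obtain out where
    out: "exec (proj GV GF M) (body (proj GV GF M)) c1 out" "out = Norm c2 \<or> out = Ret c2"
    by (auto simp: run_def)
  have "simulates GV GF M (body M) C1 out"
  proof (rule exec_proj_simulates[OF assms(1,2) out(1)])
    show "body (proj GV GF M) = proj_stmt GV GF (params M) (results M) (body M)"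
      by (simp add: proj_def)
    show "aug GV GF (params M) (results M) (body M)"
      using assms(1) by (simp add: wf_proc_def)
  qed (use assms(5) out(2) in \<open>auto simp: extends_def substmts_refl\<close>)
  then show ?thesis
    using out(2) unfolding simulates_def run_def extends_def by auto
qed

end
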